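(* Consider the following linear closed-loop model of a lossless modular multilevel converter (MMC) interconnecting an AC network and a DC network. The MMC's total internal energy $W_t$ satisfies $$\tfrac{d}{dt} W_t = P_{\mathrm{dc}} - P_{\mathrm{ac}},$$ where $P_{\mathrm{dc}}$ is the power flowing from the DC network into the MMC and $P_{\mathrm{ac}}$ is the power flowing out of the MMC into the AC network. Write $\Delta W_t = W_t - W_t^\star$ for a constant energy setpoint $W_t^\star$. The MMC AC voltage angle $\theta$ satisfies $\tfrac{d}{dt}\theta = \omega$, and the MMC AC frequency $\omega$ and DC terminal voltage $V^{\mathrm{dc}}_t$ are determined by one of the following two controls (with constant setpoints $\omega^\star$, $V^{\mathrm{dc}\star}_t$, and power setpoints $P^\star_{\mathrm{ac}}=P^\star_{\mathrm{dc}}=0$): (i) hybrid power/energy droop control (unfiltered): $$\omega = \omega^\star + k_p^{\mathrm{ac}}(P^\star_{\mathrm{ac}} - P_{\mathrm{ac}}) + k_w^{\mathrm{ac}}\Delta W_t,\qquad V^{\mathrm{dc}}_t = V^{\mathrm{dc}\star}_t + k_p^{\mathrm{dc}}(P_{\mathrm{dc}} - P^\star_{\mathrm{dc}}) + k_w^{\mathrm{dc}}\Delta W_t,$$ with $k_w^{\mathrm{ac}} > k_p^{\mathrm{ac}}$; (ii) energy-balancing control with ideal proportional-derivative action: $$\omega = \omega^\star + k_p^{\mathrm{ac}}\tfrac{d}{dt}\Delta W_t + k_w^{\mathrm{ac}}\Delta W_t,\qquad V^{\mathrm{dc}}_t = V^{\mathrm{dc}\star}_t + k_p^{\mathrm{dc}}\tfrac{d}{dt}\Delta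 W_t + k_w^{\mathrm{dc}}\Delta W_t.$$ In both cases $k_p^{\mathrm{ac}}, k_p^{\mathrm{dc}}, k_w^{\mathrm{ac}}, k_w^{\mathrm{dc}} > 0$. The linearized AC network (when connected) is $P_{\mathrm{ac}} = b_{\mathrm{ac}}(\theta - \theta_{\mathrm{ac}})$, $\tfrac{d}{dt}\theta_{\mathrm{ac}} = \omega^\star + k_{\mathrm{ac}} P_{\mathrm{ac}}$, with susceptance $b_{\mathrm{ac}}>0$ and AC source droop coefficient $k_{\mathrm{ac}}\ge 0$; when the AC network is disconnected, $P_{\mathrm{ac}}\equiv 0$. The linearized DC network (when connected) is $P_{\mathrm{dc}} = g_{\mathrm{dc}}(V_{\mathrm{dc}} - V^{\mathrm{dc}}_t)$, $V_{\mathrm{dc}} = V^{\mathrm{dc}\star}_t - k_{\mathrm{dc}}P_{\mathrm{dc}}$, with conductance $g_{\mathrm{dc}}>0$ and DC source droop coefficient $k_{\mathrm{dc}}\ge 0$; when the DC network is disconnected, $P_{\mathrm{dc}}\equiv 0$. Then, for either control (i) or (ii), and whether the MMC is connected (a) only to the AC network, (b) only to the DC network, or (c) to both networks, the resulting linear closed-loop system (in the state $\Delta W_t$ together with, when the AC network is connected, the angle difference $\theta-\theta_{\mathrm{ac}}$) has an asymptotically stable equilibrium at the origin; in particular $W_t \to W_t^\star$, $\omega\to\omega^\star$ and $V^{\mathrm{dc}}_t \to V^{\mathrm{dc}\star}_t$ for every initial condition.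
   Context: This is a macroscopic (averaged) MMC model in which fast internal converter dynamics (current control, arm energy balancing, voltage control) are neglected, the MMC is lossless, and the network equations are linearized around the zero-power-flow operating point. The AC source is a voltage source with frequency droop and the DC source is a voltage source with power–voltage droop, each behind an equivalent line (susceptance $b_{\mathrm{ac}}$, resp. conductance $g_{\mathrm{dc}}$). "Asymptotically stable" refers to the equilibrium of the linear time-invariant closed-loop ODE. *)

theory Defs
  imports Complex_Main
begin

datatype control = HybridDroop | EnergyPD
datatype config = AC_only | DC_only | AC_and_DC

definition ac_connected :: "config \<Rightarrow> bool" where
  "ac_connected c \<longleftrightarrow> c \<noteq> DC_only"
definition dc_connected :: "config \<Rightarrow> bool" where
  "dc_connected c \<longleftrightarrow> c \<noteq> AC_only"

record mmc_params =
  kp_ac :: real  kp_dc :: real  kw_ac :: real  kw_dc :: real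
  b_ac :: real  k_ac :: real  g_dc :: real  k_dc :: real
  W_star :: real  omega_star :: real  Vdc_star :: real

text \<open>Signals of the closed loop: total energy W, its time derivative dW, MMC angle,
  AC source angle, MMC frequency, MMC DC terminal voltage V_t, AC power, DC power,
  DC source voltage.\<close>
record mmc_signals =
  sW :: "real \<Rightarrow> real"  sdW :: "real \<Rightarrow> real"
  stheta :: "real \<Rightarrow> real"  stheta_ac :: "real \<Rightarrow> real"
  somega :: "real \<Rightarrow> real"  sVt :: "real \<Rightarrow> real"
  sPac :: "real \<Rightarrow> real"  sPdc :: "real \<Rightarrow> real"  sVdc :: "real \<Rightarrow> real"

definition closed_loop :: "control \<Rightarrow> config \<Rightarrow> mmc_params \<Rightarrow> mmc_signals \<Rightarrow> bool" where
  "closed_loop u c p s \<longleftrightarrow> (\<forall>t\<ge>0.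
      \<comment> \<open>energy dynamics\<close>
      (sW s has_real_derivative sdW s t) (at t within {0..}) \<and>
      sdW s t = sPdc s t - sPac s t \<and>
      \<comment> \<open>MMC angle\<close>
      (stheta s has_real_derivative somega s t) (at t within {0..}) \<and>
      \<comment> \<open>control law\<close>
      (case u of
         HybridDroop \<Rightarrow>
           somega s t = omega_star p + kp_ac p * (0 - sPac s t) + kw_ac p * (sW s t - W_star p) \<and>
           sVt s t = Vdc_star p + kp_dc p * (sPdc s t - 0) + kw_dc p * (sW s t - W_star p)
       | EnergyPD \<Rightarrow>
           somega s t = omega_star p + kp_ac p * sdW s t + kw_ac p * (sW s t - W_star p) \<and>
           sVt s t = Vdc_star p + kp_dc p * sdW s t + kw_dc p * (sW s t - W_star p)) \<and>
      \<comment> \<open>AC network\<close>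
      (if ac_connected c then
         sPac s t = b_ac p * (stheta s t - stheta_ac s t) \<and>
         (stheta_ac s has_real_derivative (omega_star p + k_ac p * sPac s t)) (at t within {0..})
       else sPac s t = 0) \<and>
      \<comment> \<open>DC network\<close>
      (if dc_connected c then
         sPdc s t = g_dc p * (sVdc s t - sVt s t) \<and>
         sVdc s t = Vdc_star p - k_dc p * sPdc s t
       else sPdc s t = 0))"

definition state_x :: "mmc_params \<Rightarrow> mmc_signals \<Rightarrow> real \<Rightarrow> real" where
  "state_x p s t = sW s t - W_star p"
definition state_d :: "config \<Rightarrow> mmc_signals \<Rightarrow> real \<Rightarrow> real" where
  "state_d c s t = (if ac_connected c then stheta s t - stheta_ac s t else 0)"
definition state_norm :: "config \<Rightarrow> mmc_params \<Rightarrow> mmc_signals \<Rightarrow> real \<Rightarrow> real" where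
  "state_norm c p s t = \<bar>state_x p s t\<bar> + \<bar>state_d c s t\<bar>"

definition asymptotically_stable :: "control \<Rightarrow> config \<Rightarrow> mmc_params \<Rightarrow> bool" where
  "asymptotically_stable u c p \<longleftrightarrow>
     (\<forall>x0 d0. \<exists>s. closed_loop u c p s \<and> state_x p s 0 = x0 \<and>
                  state_d c s 0 = (if ac_connected c then d0 else 0)) \<and>
     (\<forall>\<epsilon>>0. \<exists>\<delta>>0. \<forall>s. closed_loop u c p s \<longrightarrow> state_norm c p s 0 < \<delta> \<longrightarrow>
                     (\<forall>t\<ge>0. state_norm c p s t < \<epsilon>)) \<and>
     (\<forall>s. closed_loop u c p s \<longrightarrow> (state_norm c p s \<longlongrightarrow> 0) at_top)"

end

theory Submission
  imports Defs
begin

text \<open>Eliminating the algebraic network and control equations reduces every configuration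
  to a planar linear system in \<open>x = \<Delta>W\<^sub>t\<close> and \<open>d = \<theta> - \<theta>\<^sub>a\<^sub>c\<close> whose matrix has negative
  trace and positive determinant for all admissible gains. Such a matrix admits a quadratic
  Lyapunov function, which gives exponential decay of the state and hence stability and
  attractivity; frequency and DC voltage are affine in the state. Solutions for arbitrary
  initial states are written down explicitly.\<close>

section \<open>Planar linear differential equations\<close>

lemma cos_sin_pair_exists:
  fixes q :: real
  obtains C S where "C 0 = 1" "S 0 = 0"
    "\<And>t. (C has_real_derivative q * S t) (at t)" "\<And>t. (S has_real_derivative C t) (at t)"
proof -
  consider "q > 0" | "q < 0" | "q = 0" by linarith
  then show ?thesis
  proof cases
    case 1
    define r where "r = sqrt q"
    have r: "r > 0" "r * r = q" using 1 by (auto simp: r_def)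
    show ?thesis
    proof (rule that[of "\<lambda>t. cosh (r*t)" "\<lambda>t. sinh (r*t) / r"])
      fix t
      show "((\<lambda>t. cosh (r*t)) has_real_derivative q * (sinh (r*t) / r)) (at t)"
        using r by (auto intro!: derivative_eq_intros simp: field_simps)
      show "((\<lambda>t. sinh (r*t) / r) has_real_derivative cosh (r*t)) (at t)"
        using r by (auto intro!: derivative_eq_intros simp: field_simps)
    qed auto
  next
    case 2
    define r where "r = sqrt (-q)"
    have r: "r > 0" "q = -(r * r)" using 2 by (auto simp: r_def)
    show ?thesis
    proof (rule that[of "\<lambda>t. cos (r*t)" "\<lambda>t. sin (r*t) / r"])
      fix t
      show "((\<lambda>t. cos (r*t)) has_real_derivative q * (sin (r*t) / r)) (at t)"
        using r by (auto intro!: derivative_eq_intros simp: field_simps)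
      show "((\<lambda>t. sin (r*t) / r) has_real_derivative cos (r*t)) (at t)"
        using r by (auto intro!: derivative_eq_intros simp: field_simps)
    qed auto
  next
    case 3
    show ?thesis
      by (rule that[of "\<lambda>_. 1" "\<lambda>t. t"]) (auto intro!: derivative_eq_intros simp: 3)
  qed
qed

text \<open>With \<open>h = (a11 - a22)/2\<close>, the matrix \<open>B = A - (tr A / 2) I\<close> satisfies
  \<open>B\<^sup>2 = (h\<^sup>2 + a12 a21) I\<close> (Cayley--Hamilton), so \<open>exp (t B) = C t I + S t B\<close>.\<close>
lemma linear_ode2_solution_exists:
  fixes a11 a12 a21 a22 x0 y0 :: real
  obtains x y where "x 0 = x0" "y 0 = y0"
    "\<And>t. (x has_real_derivative a11 * x t + a12 * y t) (at t)"
    "\<And>t. (y has_real_derivative a21 * x t + a22 * y t) (at t)"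
proof -
  define h where "h = (a11 - a22) / 2"
  define T where "T = a11 + a22"
  obtain C S where CS: "C 0 = 1" "S 0 = 0"
    "\<And>t. (C has_real_derivative (h*h + a12*a21) * S t) (at t)"
    "\<And>t. (S has_real_derivative C t) (at t)"
    using cos_sin_pair_exists by blast
  define x where "x t = exp (T/2*t) * (C t * x0 + S t * (h*x0 + a12*y0))" for t
  define y where "y t = exp (T/2*t) * (C t * y0 + S t * (a21*x0 - h*y0))" for t
  show ?thesis
  proof (rule that)
    fix t
    have "(x has_real_derivative
        T/2 * x t + exp (T/2*t) * ((h*h + a12*a21) * S t * x0 + C t * (h*x0 + a12*y0))) (at t)"
      unfolding x_def[abs_def] by (auto intro!: derivative_eq_intros CS(3,4) simp: algebra_simps)
    moreover have "T/2 * x t + exp (T/2*t) * ((h*h + a12*a21) * S t * x0 + C t * (h*x0 + a12*y0))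
        = a11 * x t + a12 * y t"
      unfolding x_def y_def h_def T_def by (simp add: field_simps; simp add: algebra_simps)
    ultimately show "(x has_real_derivative a11 * x t + a12 * y t) (at t)" by simp
    have "(y has_real_derivative
        T/2 * y t + exp (T/2*t) * ((h*h + a12*a21) * S t * y0 + C t * (a21*x0 - h*y0))) (at t)"
      unfolding y_def[abs_def] by (auto intro!: derivative_eq_intros CS(3,4) simp: algebra_simps)
    moreover have "T/2 * y t + exp (T/2*t) * ((h*h + a12*a21) * S t * y0 + C t * (a21*x0 - h*y0))
        = a21 * x t + a22 * y t"
      unfolding x_def y_def h_def T_def by (simp add: field_simps; simp add: algebra_simps)
    ultimately show "(y has_real_derivative a21 * x t + a22 * y t) (at t)" by simp
  qed (simp_all add: x_def y_def CS)
qed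

text \<open>The antiderivative is the second row of \<open>A\<^sup>-\<^sup>1\<close> applied to \<open>(x, y)\<close>.\<close>
lemma linear_ode2_antiderivative:
  fixes a11 a12 a21 a22 :: real
  assumes D: "a11 * a22 - a12 * a21 \<noteq> 0"
    and dx: "(x has_real_derivative a11 * x t + a12 * y t) (at t)"
    and dy: "(y has_real_derivative a21 * x t + a22 * y t) (at t)"
  shows "((\<lambda>t. (a11 * y t - a21 * x t) / (a11 * a22 - a12 * a21)) has_real_derivative y t) (at t)"
proof -
  have "((\<lambda>t. a11 * y t - a21 * x t) has_real_derivative
      a11 * (a21 * x t + a22 * y t) - a21 * (a11 * x t + a12 * y t)) (at t)"
    by (intro DERIV_diff DERIV_cmult dx dy)
  also have "a11 * (a21 * x t + a22 * y t) - a21 * (a11 * x t + a12 * y t)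
      = (a11 * a22 - a12 * a21) * y t"
    by (simp add: algebra_simps)
  finally have "((\<lambda>t. (a11 * y t - a21 * x t) / (a11 * a22 - a12 * a21)) has_real_derivative
      (a11 * a22 - a12 * a21) * y t / (a11 * a22 - a12 * a21)) (at t)"
    by (rule DERIV_cdivide)
  then show ?thesis using D by simp
qed

lemma nonpos_deriv_imp_le_initial:
  fixes g :: "real \<Rightarrow> real"
  assumes deriv: "\<And>t. t \<ge> 0 \<Longrightarrow> (g has_real_derivative g' t) (at t within {0..})"
    and nonpos: "\<And>t. t \<ge> 0 \<Longrightarrow> g' t \<le> 0" and "t \<ge> 0"
  shows "g t \<le> g 0"
proof (rule DERIV_nonpos_imp_decreasing_open[OF \<open>t \<ge> 0\<close>])
  fix s :: real assume s: "0 < s" "s < t"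
  have "(g has_real_derivative g' s) (at s within {0<..})"
    using deriv[of s] s by (auto intro: DERIV_subset)
  then have "(g has_real_derivative g' s) (at s)"
    using s by (simp add: at_within_open[of s "{0<..}"])
  then show "\<exists>y. (g has_real_derivative y) (at s) \<and> y \<le> 0"
    using nonpos[of s] s by auto
next
  show "continuous_on {0..t} g"
    by (rule continuous_on_subset[OF DERIV_continuous_on[of "{0..}" g g']]) (use deriv in auto)
qed

lemma differential_inequality_exp_decay:
  fixes V :: "real \<Rightarrow> real"
  assumes deriv: "\<And>t. t \<ge> 0 \<Longrightarrow> (V has_real_derivative V' t) (at t within {0..})"
    and ineq: "\<And>t. t \<ge> 0 \<Longrightarrow> V' t \<le> - a * V t" and "t \<ge> 0"
  shows "V t \<le> V 0 * exp (- a * t)"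
proof -
  define g where "g t = V t * exp (a * t)" for t
  have "g t \<le> g 0"
  proof (rule nonpos_deriv_imp_le_initial[OF _ _ \<open>t \<ge> 0\<close>])
    fix s :: real assume "s \<ge> 0"
    show "(g has_real_derivative (V' s + a * V s) * exp (a * s)) (at s within {0..})"
      unfolding g_def[abs_def]
      by (rule derivative_eq_intros deriv \<open>s \<ge> 0\<close> refl)+ (simp add: algebra_simps)
    show "(V' s + a * V s) * exp (a * s) \<le> 0"
      using ineq[OF \<open>s \<ge> 0\<close>] by (simp add: mult_nonpos_nonneg)
  qed
  then show ?thesis by (simp add: g_def exp_minus field_simps)
qed

lemma quadratic_form_nonneg:
  fixes a b c x y :: real
  assumes "a > 0" "b\<^sup>2 \<le> a * c"
  shows "a * x\<^sup>2 + 2 * b * x * y + c * y\<^sup>2 \<ge> 0"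
proof -
  have "a * (a * x\<^sup>2 + 2 * b * x * y + c * y\<^sup>2) = (a * x + b * y)\<^sup>2 + (a * c - b\<^sup>2) * y\<^sup>2"
    by (simp add: power2_eq_square algebra_simps)
  also have "\<dots> \<ge> 0" using assms by auto
  finally show ?thesis using \<open>a > 0\<close> by (simp add: zero_le_mult_iff)
qed

lemma positive_definite_quadratic_form_bounds:
  fixes p1 p2 p3 :: real
  assumes p1: "p1 > 0" and det: "p2\<^sup>2 < p1 * p3"
  obtains \<mu> M where "\<mu> > 0" "M > 0"
    "\<And>x y. \<mu> * (x\<^sup>2 + y\<^sup>2) \<le> p1 * x\<^sup>2 + 2 * p2 * x * y + p3 * y\<^sup>2"
    "\<And>x y. p1 * x\<^sup>2 + 2 * p2 * x * y + p3 * y\<^sup>2 \<le> M * (x\<^sup>2 + y\<^sup>2)"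
proof
  have "p1 * p3 > 0" using det zero_le_power2[of p2] by linarith
  then have p3: "p3 > 0" using p1 by (simp add: zero_less_mult_iff)
  define \<mu> where "\<mu> = (p1 * p3 - p2\<^sup>2) / (p1 + p3)"
  show "\<mu> > 0" using det p1 p3 by (simp add: \<mu>_def)
  show "p1 + p3 + \<bar>p2\<bar> > 0" using p1 p3 by simp
  fix x y :: real
  have "\<mu> * (p1 + p3) = p1 * p3 - p2\<^sup>2" using p1 p3 by (simp add: \<mu>_def)
  then have "(p1 - \<mu>) * (p3 - \<mu>) - p2\<^sup>2 = \<mu>\<^sup>2"
    by (simp add: algebra_simps power2_eq_square)
  then have "p2\<^sup>2 \<le> (p1 - \<mu>) * (p3 - \<mu>)"
    using zero_le_power2[of \<mu>] by linarith
  moreover have "\<mu> < p1"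
  proof -
    have "p1 * p3 - p2\<^sup>2 < p1 * (p1 + p3)"
      using p1 zero_le_power2[of p2] by (simp add: algebra_simps add_pos_nonneg)
    then show ?thesis using p1 p3 by (simp add: \<mu>_def divide_less_eq)
  qed
  ultimately have "(p1 - \<mu>) * x\<^sup>2 + 2 * p2 * x * y + (p3 - \<mu>) * y\<^sup>2 \<ge> 0"
    by (intro quadratic_form_nonneg) auto
  then show "\<mu> * (x\<^sup>2 + y\<^sup>2) \<le> p1 * x\<^sup>2 + 2 * p2 * x * y + p3 * y\<^sup>2"
    by (simp add: algebra_simps)
  have "2 * \<bar>x * y\<bar> \<le> x\<^sup>2 + y\<^sup>2"
    using zero_le_power2[of "\<bar>x\<bar> - \<bar>y\<bar>"] by (simp add: power2_eq_square algebra_simps abs_mult)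
  then have "\<bar>p2\<bar> * (2 * \<bar>x * y\<bar>) \<le> \<bar>p2\<bar> * (x\<^sup>2 + y\<^sup>2)"
    by (rule mult_left_mono) simp
  moreover have "2 * p2 * x * y \<le> \<bar>p2\<bar> * (2 * \<bar>x * y\<bar>)"
    using abs_ge_self[of "2 * p2 * x * y"] by (simp add: abs_mult mult.assoc)
  moreover have "p1 * x\<^sup>2 \<le> p1 * (x\<^sup>2 + y\<^sup>2)" "p3 * y\<^sup>2 \<le> p3 * (x\<^sup>2 + y\<^sup>2)"
    using p1 p3 by (auto intro!: mult_left_mono)
  moreover have "(p1 + p3 + \<bar>p2\<bar>) * (x\<^sup>2 + y\<^sup>2)
      = p1 * (x\<^sup>2 + y\<^sup>2) + p3 * (x\<^sup>2 + y\<^sup>2) + \<bar>p2\<bar> * (x\<^sup>2 + y\<^sup>2)"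
    by (simp add: algebra_simps)
  ultimately show "p1 * x\<^sup>2 + 2 * p2 * x * y + p3 * y\<^sup>2 \<le> (p1 + p3 + \<bar>p2\<bar>) * (x\<^sup>2 + y\<^sup>2)"
    by linarith
qed

text \<open>The Lyapunov function is the quadratic form of \<open>P = det A \<cdot> I + adj(A)\<^sup>T adj(A)\<close>,
  which solves \<open>A\<^sup>T P + P A = 2 (tr A) (det A) I\<close>.\<close>
lemma linear_ode2_exp_decay:
  fixes a11 a12 a21 a22 :: real
  assumes tr: "a11 + a22 < 0" and det: "a11 * a22 - a12 * a21 > 0"
  obtains K \<gamma> where "K > 0" "\<gamma> > 0"
    "\<And>x y t. (\<And>t. t \<ge> 0 \<Longrightarrow> (x has_real_derivative a11 * x t + a12 * y t) (at t within {0..})) \<Longrightarrow>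
       (\<And>t. t \<ge> 0 \<Longrightarrow> (y has_real_derivative a21 * x t + a22 * y t) (at t within {0..})) \<Longrightarrow>
       t \<ge> 0 \<Longrightarrow> (x t)\<^sup>2 + (y t)\<^sup>2 \<le> K * ((x 0)\<^sup>2 + (y 0)\<^sup>2) * exp (- \<gamma> * t)"
proof -
  define D where "D = a11 * a22 - a12 * a21"
  define p1 where "p1 = D + a21\<^sup>2 + a22\<^sup>2"
  define p2 where "p2 = - (a12 * a22 + a11 * a21)"
  define p3 where "p3 = D + a11\<^sup>2 + a12\<^sup>2"
  define \<kappa> where "\<kappa> = - 2 * (a11 + a22) * D"
  have D: "D > 0" using det by (simp add: D_def)
  have p1: "p1 > 0" using D by (simp add: p1_def add_pos_nonneg)
  have "p1 * p3 - p2\<^sup>2 = 2 * D\<^sup>2 + D * (a11\<^sup>2 + a12\<^sup>2 + a21\<^sup>2 + a22\<^sup>2)"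
    unfolding p1_def p2_def p3_def D_def by (simp add: power2_eq_square algebra_simps)
  also have "\<dots> > 0" using D by (simp add: add_pos_nonneg)
  finally have "p2\<^sup>2 < p1 * p3" by simp
  then obtain \<mu> M where \<mu>: "\<mu> > 0" and M: "M > 0"
    and lower: "\<And>x y. \<mu> * (x\<^sup>2 + y\<^sup>2) \<le> p1 * x\<^sup>2 + 2 * p2 * x * y + p3 * y\<^sup>2"
    and upper: "\<And>x y. p1 * x\<^sup>2 + 2 * p2 * x * y + p3 * y\<^sup>2 \<le> M * (x\<^sup>2 + y\<^sup>2)"
    using positive_definite_quadratic_form_bounds[OF p1] by blast
  have \<kappa>: "\<kappa> > 0" using tr D by (simp add: \<kappa>_def mult_neg_pos)
  show ?thesis
  proof (rule that[of "M / \<mu>" "\<kappa> / M"])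
    show "M / \<mu> > 0" "\<kappa> / M > 0" using M \<mu> \<kappa> by simp_all
    fix x y :: "real \<Rightarrow> real" and t :: real
    assume dx: "\<And>t. t \<ge> 0 \<Longrightarrow> (x has_real_derivative a11 * x t + a12 * y t) (at t within {0..})"
      and dy: "\<And>t. t \<ge> 0 \<Longrightarrow> (y has_real_derivative a21 * x t + a22 * y t) (at t within {0..})"
      and "t \<ge> 0"
    define V where "V s = p1 * (x s)\<^sup>2 + 2 * p2 * x s * y s + p3 * (y s)\<^sup>2" for s
    have "V t \<le> V 0 * exp (- (\<kappa> / M) * t)"
    proof (rule differential_inequality_exp_decay[OF _ _ \<open>t \<ge> 0\<close>])
      fix s :: real assume "s \<ge> 0"
      let ?x' = "a11 * x s + a12 * y s" and ?y' = "a21 * x s + a22 * y s"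
      have "(V has_real_derivative
          p1 * (2 * x s * ?x') + 2 * p2 * (?x' * y s + x s * ?y') + p3 * (2 * y s * ?y'))
          (at s within {0..})"
        unfolding V_def[abs_def]
        by (rule derivative_eq_intros dx dy \<open>s \<ge> 0\<close> refl)+ (simp add: algebra_simps)
      moreover have "p1 * (2 * x s * ?x') + 2 * p2 * (?x' * y s + x s * ?y') + p3 * (2 * y s * ?y')
          = - \<kappa> * ((x s)\<^sup>2 + (y s)\<^sup>2)"
        unfolding p1_def p2_def p3_def \<kappa>_def D_def by (simp add: power2_eq_square algebra_simps)
      ultimately show "(V has_real_derivative - \<kappa> * ((x s)\<^sup>2 + (y s)\<^sup>2)) (at s within {0..})"
        by simp
      have "\<kappa> / M * V s \<le> \<kappa> / M * (M * ((x s)\<^sup>2 + (y s)\<^sup>2))"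
        using upper[of "x s" "y s"] \<kappa> M by (intro mult_left_mono) (auto simp: V_def)
      then show "- \<kappa> * ((x s)\<^sup>2 + (y s)\<^sup>2) \<le> - (\<kappa> / M) * V s"
        using M by simp
    qed
    also have "\<dots> \<le> M * ((x 0)\<^sup>2 + (y 0)\<^sup>2) * exp (- (\<kappa> / M) * t)"
      using upper[of "x 0" "y 0"] by (intro mult_right_mono) (auto simp: V_def)
    finally have "\<mu> * ((x t)\<^sup>2 + (y t)\<^sup>2) \<le> M * ((x 0)\<^sup>2 + (y 0)\<^sup>2) * exp (- (\<kappa> / M) * t)"
      using lower[of "x t" "y t"] by (simp add: V_def)
    then show "(x t)\<^sup>2 + (y t)\<^sup>2 \<le> M / \<mu> * ((x 0)\<^sup>2 + (y 0)\<^sup>2) * exp (- (\<kappa> / M) * t)"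
      using \<mu> by (simp add: field_simps)
  qed
qed

lemma abs_sum_le_of_square_sum_le:
  fixes a b a0 b0 K e :: real
  assumes "K > 0" "e \<ge> 0" and le: "a\<^sup>2 + b\<^sup>2 \<le> K * (a0\<^sup>2 + b0\<^sup>2) * e\<^sup>2"
  shows "\<bar>a\<bar> + \<bar>b\<bar> \<le> sqrt (2 * K) * (\<bar>a0\<bar> + \<bar>b0\<bar>) * e"
proof (rule power2_le_imp_le)
  show "0 \<le> sqrt (2 * K) * (\<bar>a0\<bar> + \<bar>b0\<bar>) * e" using assms by simp
  have "(\<bar>a\<bar> + \<bar>b\<bar>)\<^sup>2 \<le> 2 * (a\<^sup>2 + b\<^sup>2)"
    using zero_le_power2[of "\<bar>a\<bar> - \<bar>b\<bar>"] by (simp add: power2_eq_square algebra_simps)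
  also have "\<dots> \<le> 2 * K * (a0\<^sup>2 + b0\<^sup>2) * e\<^sup>2" using le by simp
  also have "\<dots> \<le> 2 * K * (\<bar>a0\<bar> + \<bar>b0\<bar>)\<^sup>2 * e\<^sup>2"
    using \<open>K > 0\<close> by (intro mult_right_mono mult_left_mono) (auto simp: power2_eq_square algebra_simps)
  also have "\<dots> = (sqrt (2 * K) * (\<bar>a0\<bar> + \<bar>b0\<bar>) * e)\<^sup>2"
    using \<open>K > 0\<close> by (simp add: power_mult_distrib)
  finally show "(\<bar>a\<bar> + \<bar>b\<bar>)\<^sup>2 \<le> (sqrt (2 * K) * (\<bar>a0\<bar> + \<bar>b0\<bar>) * e)\<^sup>2" .
qed

section \<open>Reduction of the closed loop\<close>

definition admissible_params :: "mmc_params \<Rightarrow> bool" where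
  "admissible_params p \<longleftrightarrow> kp_ac p > 0 \<and> kp_dc p > 0 \<and> kw_ac p > 0 \<and> kw_dc p > 0 \<and>
     b_ac p > 0 \<and> k_ac p \<ge> 0 \<and> g_dc p > 0 \<and> k_dc p \<ge> 0"

text \<open>The reduced system is \<open>x' = - energy_damping \<cdot> x - energy_coupling \<cdot> d\<close>, with
  outputs \<open>\<omega> = \<omega>\<^sup>\<star> + freq_gain_energy \<cdot> x + freq_gain_angle \<cdot> d\<close> and
  \<open>V\<^sub>t = V\<^sup>\<star> + volt_gain_energy \<cdot> x + volt_gain_angle \<cdot> d\<close>.\<close>
definition dc_conductance :: "config \<Rightarrow> mmc_params \<Rightarrow> real" where
  "dc_conductance c p = (if dc_connected c then g_dc p / (1 + g_dc p * k_dc p) else 0)"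
definition dc_droop_factor :: "config \<Rightarrow> mmc_params \<Rightarrow> real" where
  "dc_droop_factor c p = 1 + dc_conductance c p * kp_dc p"
definition energy_damping :: "config \<Rightarrow> mmc_params \<Rightarrow> real" where
  "energy_damping c p = dc_conductance c p * kw_dc p / dc_droop_factor c p"
definition energy_coupling :: "control \<Rightarrow> config \<Rightarrow> mmc_params \<Rightarrow> real" where
  "energy_coupling u c p =
     (case u of HybridDroop \<Rightarrow> b_ac p | EnergyPD \<Rightarrow> b_ac p / dc_droop_factor c p)"
definition freq_gain_energy :: "control \<Rightarrow> config \<Rightarrow> mmc_params \<Rightarrow> real" where
  "freq_gain_energy u c p =
     (case u of HybridDroop \<Rightarrow> kw_ac p | EnergyPD \<Rightarrow> kw_ac p - kp_ac p * energy_damping c p)"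
definition freq_gain_angle :: "control \<Rightarrow> config \<Rightarrow> mmc_params \<Rightarrow> real" where
  "freq_gain_angle u c p = - kp_ac p * energy_coupling u c p"
definition volt_gain_energy :: "config \<Rightarrow> mmc_params \<Rightarrow> real" where
  "volt_gain_energy c p = kw_dc p - kp_dc p * energy_damping c p"
definition volt_gain_angle :: "control \<Rightarrow> config \<Rightarrow> mmc_params \<Rightarrow> real" where
  "volt_gain_angle u c p =
     (case u of HybridDroop \<Rightarrow> 0 | EnergyPD \<Rightarrow> - kp_dc p * energy_coupling u c p)"

text \<open>The second row \<open>d' = angle_rate_energy \<cdot> x + angle_rate_angle \<cdot> d\<close> of the reduced system.
  Without AC network \<open>d\<close> is identically \<open>0\<close>, and the row \<open>d' = - d\<close> is a stable dummy.\<close>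
definition angle_rate_energy :: "control \<Rightarrow> config \<Rightarrow> mmc_params \<Rightarrow> real" where
  "angle_rate_energy u c p = (if ac_connected c then freq_gain_energy u c p else 0)"
definition angle_rate_angle :: "control \<Rightarrow> config \<Rightarrow> mmc_params \<Rightarrow> real" where
  "angle_rate_angle u c p =
     (if ac_connected c then freq_gain_angle u c p - k_ac p * b_ac p else -1)"

lemma not_ac_connected_imp_dc_connected: "\<not> ac_connected c \<Longrightarrow> dc_connected c"
  by (cases c) (auto simp: ac_connected_def dc_connected_def)

lemma reduced_coeff_signs:
  assumes "admissible_params p"
  shows "dc_conductance c p \<ge> 0" "dc_droop_factor c p > 0" "energy_damping c p \<ge> 0"
    "energy_coupling u c p > 0" "freq_gain_angle u c p < 0"
    "dc_connected c \<Longrightarrow> energy_damping c p > 0"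
proof -
  have g: "g_dc p > 0" "k_dc p \<ge> 0" "kp_dc p > 0" "kw_dc p > 0" "b_ac p > 0" "kp_ac p > 0"
    using assms by (auto simp: admissible_params_def)
  have d: "1 + g_dc p * k_dc p > 0" using g by (simp add: add_pos_nonneg)
  show G: "dc_conductance c p \<ge> 0" using g d by (simp add: dc_conductance_def)
  show e: "dc_droop_factor c p > 0" using G g by (simp add: dc_droop_factor_def add_pos_nonneg)
  show "energy_damping c p \<ge> 0" using G g e by (simp add: energy_damping_def)
  show b: "energy_coupling u c p > 0" using g e by (cases u) (auto simp: energy_coupling_def)
  show "freq_gain_angle u c p < 0" using b g by (simp add: freq_gain_angle_def)
  show "energy_damping c p > 0" if "dc_connected c"
    using that g d e by (simp add: energy_damping_def dc_conductance_def)
qed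

lemma reduced_trace_neg:
  assumes "admissible_params p"
  shows "- energy_damping c p + angle_rate_angle u c p < 0"
proof -
  have "energy_damping c p \<ge> 0" "freq_gain_angle u c p < 0" "k_ac p * b_ac p \<ge> 0"
    using reduced_coeff_signs[OF assms] assms by (auto simp: admissible_params_def)
  then show ?thesis by (simp add: angle_rate_angle_def)
qed

lemma reduced_det_pos:
  assumes P: "admissible_params p"
  shows "(- energy_damping c p) * angle_rate_angle u c p
      - (- energy_coupling u c p) * angle_rate_energy u c p > 0"
proof (cases "ac_connected c")
  case True
  have g: "b_ac p > 0" "kp_ac p > 0" "kw_ac p > 0" "k_ac p \<ge> 0"
    using P by (auto simp: admissible_params_def)
  have ed: "energy_damping c p \<ge> 0" and e: "dc_droop_factor c p > 0"
    using reduced_coeff_signs[OF P] by auto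
  have "energy_damping c p * (k_ac p * b_ac p) \<ge> 0" using ed g by simp
  moreover have "(- energy_damping c p) * angle_rate_angle u c p
      - (- energy_coupling u c p) * angle_rate_energy u c p
      = energy_damping c p * (k_ac p * b_ac p) + (case u of
          HybridDroop \<Rightarrow> energy_damping c p * kp_ac p * b_ac p + b_ac p * kw_ac p
        | EnergyPD \<Rightarrow> b_ac p * kw_ac p / dc_droop_factor c p)"
    using True e
    by (cases u) (simp_all add: angle_rate_angle_def angle_rate_energy_def freq_gain_angle_def
        freq_gain_energy_def energy_coupling_def field_simps)
  moreover have "(case u of
          HybridDroop \<Rightarrow> energy_damping c p * kp_ac p * b_ac p + b_ac p * kw_ac p
        | EnergyPD \<Rightarrow> b_ac p * kw_ac p / dc_droop_factor c p) > 0"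
    using ed e g by (cases u) (auto intro: add_nonneg_pos)
  ultimately show ?thesis by linarith
next
  case False
  then show ?thesis
    using reduced_coeff_signs(6)[OF P] not_ac_connected_imp_dc_connected
    by (simp add: angle_rate_angle_def angle_rate_energy_def)
qed

lemma closed_loop_dc_power:
  assumes P: "admissible_params p" and cl: "closed_loop u c p s" and t: "t \<ge> 0"
  shows "sPdc s t = dc_conductance c p * (Vdc_star p - sVt s t)"
proof (cases "dc_connected c")
  case True
  have "1 + g_dc p * k_dc p > 0" using P by (simp add: admissible_params_def add_pos_nonneg)
  moreover have "sPdc s t = g_dc p * ((Vdc_star p - k_dc p * sPdc s t) - sVt s t)"
    using cl t True unfolding closed_loop_def by (metis (no_types, lifting))
  then have "sPdc s t * (1 + g_dc p * k_dc p) = g_dc p * (Vdc_star p - sVt s t)"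
    by algebra
  ultimately show ?thesis using True by (simp add: dc_conductance_def field_simps)
next
  case False
  then show ?thesis using cl t unfolding closed_loop_def by (simp add: dc_conductance_def)
qed

lemma closed_loop_outputs:
  assumes P: "admissible_params p" and cl: "closed_loop u c p s" and t: "t \<ge> 0"
  shows "sdW s t = - energy_damping c p * state_x p s t - energy_coupling u c p * state_d c s t"
    and "somega s t = omega_star p + freq_gain_energy u c p * state_x p s t
                        + freq_gain_angle u c p * state_d c s t"
    and "sVt s t = Vdc_star p + volt_gain_energy c p * state_x p s t
                     + volt_gain_angle u c p * state_d c s t"
proof -
  define x where "x = state_x p s t"
  define d where "d = state_d c s t"
  define G where "G = dc_conductance c p"
  have e: "dc_droop_factor c p > 0" using reduced_coeff_signs[OF P] by simp
  have Pac: "sPac s t = b_ac p * d"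
    using cl t unfolding closed_loop_def d_def state_d_def by (cases "ac_connected c") auto
  have Pdc: "sPdc s t = G * (Vdc_star p - sVt s t)"
    unfolding G_def by (rule closed_loop_dc_power[OF P cl t])
  have dW: "sdW s t = sPdc s t - sPac s t" using cl t unfolding closed_loop_def by blast
  have law: "case u of
         HybridDroop \<Rightarrow> somega s t = omega_star p + kp_ac p * (0 - sPac s t) + kw_ac p * x \<and>
           sVt s t = Vdc_star p + kp_dc p * (sPdc s t - 0) + kw_dc p * x
       | EnergyPD \<Rightarrow> somega s t = omega_star p + kp_ac p * sdW s t + kw_ac p * x \<and>
           sVt s t = Vdc_star p + kp_dc p * sdW s t + kw_dc p * x"
    using cl t unfolding closed_loop_def x_def state_x_def by blast
  have "sdW s t = - energy_damping c p * x - energy_coupling u c p * d \<and>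
    somega s t = omega_star p + freq_gain_energy u c p * x + freq_gain_angle u c p * d \<and>
    sVt s t = Vdc_star p + volt_gain_energy c p * x + volt_gain_angle u c p * d"
  proof (cases u)
    case HybridDroop
    with law have om: "somega s t = omega_star p - kp_ac p * sPac s t + kw_ac p * x"
      and vt: "sVt s t = Vdc_star p + kp_dc p * sPdc s t + kw_dc p * x" by auto
    from Pdc[unfolded vt] have "sPdc s t * (1 + G * kp_dc p) = - G * kw_dc p * x"
      by algebra
    then have "sPdc s t = - energy_damping c p * x"
      using e by (simp add: energy_damping_def dc_droop_factor_def G_def field_simps)
    then show ?thesis
      using HybridDroop dW om vt Pac
      by (simp add: energy_coupling_def freq_gain_energy_def freq_gain_angle_def
          volt_gain_energy_def volt_gain_angle_def algebra_simps)
  next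
    case EnergyPD
    with law have om: "somega s t = omega_star p + kp_ac p * sdW s t + kw_ac p * x"
      and vt: "sVt s t = Vdc_star p + kp_dc p * sdW s t + kw_dc p * x" by auto
    from dW[unfolded Pdc vt Pac] have "sdW s t * (1 + G * kp_dc p) = - G * kw_dc p * x - b_ac p * d"
      by algebra
    then have "sdW s t = (- G * kw_dc p * x - b_ac p * d) / dc_droop_factor c p"
      using e by (simp add: dc_droop_factor_def G_def eq_divide_eq)
    then have dW': "sdW s t = - energy_damping c p * x - energy_coupling u c p * d"
      using EnergyPD
      by (simp add: energy_damping_def energy_coupling_def G_def diff_divide_distrib)
    show ?thesis
      unfolding om vt dW' using EnergyPD
      by (simp add: energy_coupling_def freq_gain_energy_def freq_gain_angle_def
          volt_gain_energy_def volt_gain_angle_def algebra_simps)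
  qed
  then show "sdW s t = - energy_damping c p * state_x p s t - energy_coupling u c p * state_d c s t"
    and "somega s t = omega_star p + freq_gain_energy u c p * state_x p s t
                        + freq_gain_angle u c p * state_d c s t"
    and "sVt s t = Vdc_star p + volt_gain_energy c p * state_x p s t
                     + volt_gain_angle u c p * state_d c s t"
    by (simp_all add: x_def d_def)
qed

lemma closed_loop_reduced_ode:
  assumes P: "admissible_params p" and cl: "closed_loop u c p s" and t: "t \<ge> 0"
  shows "(state_x p s has_real_derivative
            (- energy_damping c p) * state_x p s t + (- energy_coupling u c p) * state_d c s t)
           (at t within {0..})"
    and "(state_d c s has_real_derivative
            angle_rate_energy u c p * state_x p s t + angle_rate_angle u c p * state_d c s t)
           (at t within {0..})"
proof -
  have "(sW s has_real_derivative sdW s t) (at t within {0..})"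
    using cl t unfolding closed_loop_def by blast
  then have "((\<lambda>t. sW s t - W_star p) has_real_derivative sdW s t) (at t within {0..})"
    by (auto intro!: derivative_eq_intros)
  then show "(state_x p s has_real_derivative
      (- energy_damping c p) * state_x p s t + (- energy_coupling u c p) * state_d c s t)
      (at t within {0..})"
    using closed_loop_outputs(1)[OF P cl t] by (simp add: state_x_def[abs_def])
  show "(state_d c s has_real_derivative
      angle_rate_energy u c p * state_x p s t + angle_rate_angle u c p * state_d c s t)
      (at t within {0..})"
  proof (cases "ac_connected c")
    case True
    have "(stheta s has_real_derivative somega s t) (at t within {0..})"
      "(stheta_ac s has_real_derivative omega_star p + k_ac p * sPac s t) (at t within {0..})"
      "sPac s t = b_ac p * state_d c s t"
      using cl t True unfolding closed_loop_def state_d_def by auto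
    then have "((\<lambda>t. stheta s t - stheta_ac s t) has_real_derivative
        somega s t - (omega_star p + k_ac p * (b_ac p * state_d c s t))) (at t within {0..})"
      by (auto intro!: derivative_eq_intros)
    then show ?thesis
      using True closed_loop_outputs(2)[OF P cl t]
      by (simp add: state_d_def[abs_def] angle_rate_energy_def angle_rate_angle_def algebra_simps)
  next
    case False
    then show ?thesis by (simp add: state_d_def[abs_def] angle_rate_energy_def angle_rate_angle_def)
  qed
qed

lemma closed_loop_exp_bound:
  assumes P: "admissible_params p"
  obtains L \<gamma> where "L > 0" "\<gamma> > 0"
    "\<And>s t. closed_loop u c p s \<Longrightarrow> t \<ge> 0 \<Longrightarrow>
       state_norm c p s t \<le> L * state_norm c p s 0 * exp (- \<gamma> * t)"
proof -
  obtain K \<gamma> where K: "K > 0" and \<gamma>: "\<gamma> > 0"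
    and decay: "\<And>x y t.
       (\<And>t. t \<ge> 0 \<Longrightarrow> (x has_real_derivative
          (- energy_damping c p) * x t + (- energy_coupling u c p) * y t) (at t within {0..})) \<Longrightarrow>
       (\<And>t. t \<ge> 0 \<Longrightarrow> (y has_real_derivative
          angle_rate_energy u c p * x t + angle_rate_angle u c p * y t) (at t within {0..})) \<Longrightarrow>
       t \<ge> 0 \<Longrightarrow> (x t)\<^sup>2 + (y t)\<^sup>2 \<le> K * ((x 0)\<^sup>2 + (y 0)\<^sup>2) * exp (- \<gamma> * t)"
    using linear_ode2_exp_decay[OF reduced_trace_neg[OF P] reduced_det_pos[OF P]] by blast
  show ?thesis
  proof (rule that[of "sqrt (2 * K)" "\<gamma> / 2"])
    show "sqrt (2 * K) > 0" "\<gamma> / 2 > 0" using K \<gamma> by simp_all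
    fix s t assume cl: "closed_loop u c p s" and t: "t \<ge> (0::real)"
    have "exp (- \<gamma> * t) = (exp (- (\<gamma> / 2) * t))\<^sup>2"
      by (simp add: power2_eq_square exp_add[symmetric])
    then have "(state_x p s t)\<^sup>2 + (state_d c s t)\<^sup>2
        \<le> K * ((state_x p s 0)\<^sup>2 + (state_d c s 0)\<^sup>2) * (exp (- (\<gamma> / 2) * t))\<^sup>2"
      using decay[OF closed_loop_reduced_ode(1,2)[OF P cl] t] by simp
    then show "state_norm c p s t \<le> sqrt (2 * K) * state_norm c p s 0 * exp (- (\<gamma> / 2) * t)"
      unfolding state_norm_def by (rule abs_sum_le_of_square_sum_le[OF K exp_ge_zero])
  qed
qed

definition signals_of :: "control \<Rightarrow> config \<Rightarrow> mmc_params \<Rightarrow>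
    (real \<Rightarrow> real) \<Rightarrow> (real \<Rightarrow> real) \<Rightarrow> (real \<Rightarrow> real) \<Rightarrow> (real \<Rightarrow> real) \<Rightarrow> mmc_signals" where
  "signals_of u c p x d \<theta> \<theta>\<^sub>a\<^sub>c =
    (let Pac = \<lambda>t. b_ac p * d t;
         dW = \<lambda>t. - energy_damping c p * x t - energy_coupling u c p * d t
     in \<lparr>sW = \<lambda>t. W_star p + x t, sdW = dW, stheta = \<theta>, stheta_ac = \<theta>\<^sub>a\<^sub>c,
        somega = \<lambda>t. omega_star p + freq_gain_energy u c p * x t + freq_gain_angle u c p * d t,
        sVt = \<lambda>t. Vdc_star p + volt_gain_energy c p * x t + volt_gain_angle u c p * d t,
        sPac = Pac, sPdc = \<lambda>t. dW t + Pac t,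
        sVdc = \<lambda>t. Vdc_star p - k_dc p * (dW t + Pac t)\<rparr>)"

lemma dc_coefficient_identities:
  assumes P: "admissible_params p" and dc: "dc_connected c"
  shows "energy_damping c p * (1 + g_dc p * k_dc p) = g_dc p * volt_gain_energy c p"
    and "(b_ac p - energy_coupling u c p) * (1 + g_dc p * k_dc p) = - g_dc p * volt_gain_angle u c p"
proof -
  define G where "G = dc_conductance c p"
  define E where "E = dc_droop_factor c p"
  have "1 + g_dc p * k_dc p > 0" using P by (simp add: admissible_params_def add_pos_nonneg)
  then have GD: "G * (1 + g_dc p * k_dc p) = g_dc p" using dc by (simp add: G_def dc_conductance_def)
  have E: "E = 1 + G * kp_dc p" by (simp add: E_def G_def dc_droop_factor_def)
  have E0: "E > 0" using reduced_coeff_signs[OF P] by (simp add: E_def)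
  have "energy_damping c p * (1 + g_dc p * k_dc p) = G * (1 + g_dc p * k_dc p) * kw_dc p / E"
    by (simp add: energy_damping_def G_def E_def)
  also have "\<dots> = g_dc p * (kw_dc p - kp_dc p * (G * kw_dc p / E))"
    using E0 by (simp add: GD E field_simps)
  finally show "energy_damping c p * (1 + g_dc p * k_dc p) = g_dc p * volt_gain_energy c p"
    by (simp add: volt_gain_energy_def energy_damping_def G_def E_def)
  show "(b_ac p - energy_coupling u c p) * (1 + g_dc p * k_dc p) = - g_dc p * volt_gain_angle u c p"
  proof (cases u)
    case EnergyPD
    have "(b_ac p - b_ac p / E) * (1 + g_dc p * k_dc p) = b_ac p * (G * (1 + g_dc p * k_dc p)) * kp_dc p / E"
      using E0 by (simp add: E field_simps)
    then show ?thesis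
      using EnergyPD by (simp add: GD energy_coupling_def volt_gain_angle_def E_def)
  qed (simp add: energy_coupling_def volt_gain_angle_def)
qed

lemma closed_loop_signals_of:
  assumes P: "admissible_params p"
    and dx: "\<And>t. (x has_real_derivative
               - energy_damping c p * x t - energy_coupling u c p * d t) (at t)"
    and d\<theta>: "\<And>t. (\<theta> has_real_derivative
               omega_star p + freq_gain_energy u c p * x t + freq_gain_angle u c p * d t) (at t)"
    and ac: "\<And>t. ac_connected c \<Longrightarrow> \<theta> t - \<theta>\<^sub>a\<^sub>c t = d t \<and>
               (\<theta>\<^sub>a\<^sub>c has_real_derivative omega_star p + k_ac p * (b_ac p * d t)) (at t)"
    and no_ac: "\<And>t. \<not> ac_connected c \<Longrightarrow> d t = 0"
  shows "closed_loop u c p (signals_of u c p x d \<theta> \<theta>\<^sub>a\<^sub>c)"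
proof -
  have dW: "((\<lambda>t. W_star p + x t) has_real_derivative
      - energy_damping c p * x t - energy_coupling u c p * d t) (at t within {0..})" for t
    using dx[of t] by (auto intro!: derivative_eq_intros intro: has_field_derivative_at_within)
  have dc: "- energy_damping c p * X - energy_coupling u c p * Y + b_ac p * Y
      = g_dc p * ((Vdc_star p - k_dc p * (- energy_damping c p * X - energy_coupling u c p * Y
          + b_ac p * Y)) - (Vdc_star p + volt_gain_energy c p * X + volt_gain_angle u c p * Y))"
    if "dc_connected c" for X Y
  proof -
    note ids = dc_coefficient_identities[OF P that]
    have "(- energy_damping c p * X - energy_coupling u c p * Y + b_ac p * Y) * (1 + g_dc p * k_dc p)
      = - (energy_damping c p * (1 + g_dc p * k_dc p)) * X
        + ((b_ac p - energy_coupling u c p) * (1 + g_dc p * k_dc p)) * Y"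
      by (simp add: algebra_simps)
    also have "\<dots> = - (g_dc p * volt_gain_energy c p) * X - g_dc p * volt_gain_angle u c p * Y"
      unfolding ids by simp
    finally show ?thesis by (simp add: algebra_simps)
  qed
  have no_dc: "energy_damping c p = 0 \<and> energy_coupling u c p = b_ac p" if "\<not> dc_connected c"
    using that by (cases u) (simp_all add: energy_damping_def energy_coupling_def
        dc_conductance_def dc_droop_factor_def)
  show ?thesis
    unfolding closed_loop_def signals_of_def Let_def mmc_signals.simps
  proof (intro allI impI conjI, goal_cases)
    case (1 t) show ?case by (rule dW)
  next
    case (2 t) show ?case by simp
  next
    case (3 t) show ?case using d\<theta> by (rule has_field_derivative_at_within)
  next
    case (4 t) show ?case
      by (cases u) (simp_all add: energy_coupling_def freq_gain_energy_def freq_gain_angle_def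
          volt_gain_energy_def volt_gain_angle_def algebra_simps)
  next
    case (5 t) show ?case using ac no_ac by (simp add: has_field_derivative_at_within)
  next
    case (6 t) show ?case using dc no_dc by simp
  qed
qed

lemma closed_loop_solution_exists:
  assumes P: "admissible_params p"
  obtains s where "closed_loop u c p s" "state_x p s 0 = x0"
    "state_d c s 0 = (if ac_connected c then d0 else 0)"
proof (cases "ac_connected c")
  case True
  define a11 where "a11 = - energy_damping c p"
  define a12 where "a12 = - energy_coupling u c p"
  define a21 where "a21 = angle_rate_energy u c p"
  define a22 where "a22 = angle_rate_angle u c p"
  define D where "D = a11 * a22 - a12 * a21"
  have D: "D > 0" using reduced_det_pos[OF P] by (simp add: D_def a11_def a12_def a21_def a22_def)
  obtain x d where x0: "x 0 = x0" and d0: "d 0 = d0"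
    and dx: "\<And>t. (x has_real_derivative a11 * x t + a12 * d t) (at t)"
    and dd: "\<And>t. (d has_real_derivative a21 * x t + a22 * d t) (at t)"
    using linear_ode2_solution_exists by metis
  define \<theta>\<^sub>a\<^sub>c where "\<theta>\<^sub>a\<^sub>c t = omega_star p * t + k_ac p * b_ac p * ((a11 * d t - a21 * x t) / D)" for t
  define \<theta> where "\<theta> t = d t + \<theta>\<^sub>a\<^sub>c t" for t
  have d\<theta>\<^sub>a\<^sub>c: "(\<theta>\<^sub>a\<^sub>c has_real_derivative omega_star p + k_ac p * (b_ac p * d t)) (at t)" for t
  proof -
    have "((\<lambda>t. (a11 * d t - a21 * x t) / D) has_real_derivative d t) (at t)"
      using linear_ode2_antiderivative[OF _ dx dd] D by (simp add: D_def)
    from DERIV_cmult[OF this, of "k_ac p * b_ac p"]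
    have "(\<theta>\<^sub>a\<^sub>c has_real_derivative omega_star p + k_ac p * b_ac p * d t) (at t)"
      unfolding \<theta>\<^sub>a\<^sub>c_def[abs_def] by (intro DERIV_add) (auto intro!: derivative_eq_intros)
    then show ?thesis by (simp add: mult.assoc)
  qed
  have d\<theta>: "(\<theta> has_real_derivative
      omega_star p + freq_gain_energy u c p * x t + freq_gain_angle u c p * d t) (at t)" for t
    unfolding \<theta>_def[abs_def] using True
    by (auto intro!: derivative_eq_intros dd d\<theta>\<^sub>a\<^sub>c
        simp: a21_def a22_def angle_rate_energy_def angle_rate_angle_def algebra_simps)
  have "closed_loop u c p (signals_of u c p x d \<theta> \<theta>\<^sub>a\<^sub>c)"
    using dx d\<theta> d\<theta>\<^sub>a\<^sub>c True
    by (intro closed_loop_signals_of[OF P]) (simp_all add: a11_def a12_def \<theta>_def)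
  then show ?thesis
    by (rule that) (simp_all add: signals_of_def Let_def state_x_def state_d_def True \<theta>_def x0 d0)
next
  case False
  define r where "r = energy_damping c p"
  have r: "r > 0"
    using reduced_coeff_signs(6)[OF P] not_ac_connected_imp_dc_connected[OF False] by (simp add: r_def)
  define x where "x t = x0 * exp (- r * t)" for t
  define \<theta> where "\<theta> t = omega_star p * t - freq_gain_energy u c p / r * x t" for t
  have dx: "(x has_real_derivative - r * x t) (at t)" for t
    unfolding x_def[abs_def] by (auto intro!: derivative_eq_intros)
  have d\<theta>: "(\<theta> has_real_derivative omega_star p + freq_gain_energy u c p * x t) (at t)" for t
    unfolding \<theta>_def[abs_def] using r by (auto intro!: derivative_eq_intros dx)
  have "closed_loop u c p (signals_of u c p x (\<lambda>_. 0) \<theta> (\<lambda>_. 0))"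
    using dx d\<theta> False by (intro closed_loop_signals_of[OF P]) (simp_all add: r_def)
  then show ?thesis
    by (rule that) (simp_all add: signals_of_def Let_def state_x_def state_d_def False x_def)
qed

section \<open>Stability of the closed loop\<close>

lemma closed_loop_state_norm_tendsto_zero:
  assumes P: "admissible_params p" and cl: "closed_loop u c p s"
  shows "(state_norm c p s \<longlongrightarrow> 0) at_top"
proof -
  obtain L \<gamma> where "L > 0" "\<gamma> > 0" and bound: "\<And>s t. closed_loop u c p s \<Longrightarrow> t \<ge> 0 \<Longrightarrow>
      state_norm c p s t \<le> L * state_norm c p s 0 * exp (- \<gamma> * t)"
    using closed_loop_exp_bound[OF P, where u = u and c = c] by blast
  have "filterlim (\<lambda>t. - \<gamma> * t) at_bot at_top"
    using \<open>\<gamma> > 0\<close> by (intro filterlim_tendsto_neg_mult_at_bot[OF tendsto_const _ filterlim_ident]) simp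
  then have "((\<lambda>t. exp (- \<gamma> * t)) \<longlongrightarrow> 0) at_top"
    by (rule filterlim_compose[OF exp_at_bot])
  then have lim: "((\<lambda>t. L * state_norm c p s 0 * exp (- \<gamma> * t)) \<longlongrightarrow> 0) at_top"
    by (rule tendsto_mult_right_zero)
  show ?thesis
  proof (rule tendsto_sandwich[OF _ _ tendsto_const lim])
    show "\<forall>\<^sub>F t in at_top. 0 \<le> state_norm c p s t" by (simp add: state_norm_def)
    show "\<forall>\<^sub>F t in at_top. state_norm c p s t \<le> L * state_norm c p s 0 * exp (- \<gamma> * t)"
      using eventually_ge_at_top[of 0] by eventually_elim (rule bound[OF cl])
  qed
qed

lemma closed_loop_asymptotically_stable:
  assumes P: "admissible_params p"
  shows "asymptotically_stable u c p"
  unfolding asymptotically_stable_def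
proof (intro conjI)
  show "\<forall>x0 d0. \<exists>s. closed_loop u c p s \<and> state_x p s 0 = x0 \<and>
      state_d c s 0 = (if ac_connected c then d0 else 0)"
    using closed_loop_solution_exists[OF P] by metis
  show "\<forall>\<epsilon>>0. \<exists>\<delta>>0. \<forall>s. closed_loop u c p s \<longrightarrow> state_norm c p s 0 < \<delta> \<longrightarrow>
      (\<forall>t\<ge>0. state_norm c p s t < \<epsilon>)"
  proof (intro allI impI)
    fix \<epsilon> :: real assume "\<epsilon> > 0"
    obtain L \<gamma> where L: "L > 0" and "\<gamma> > 0" and bound: "\<And>s t. closed_loop u c p s \<Longrightarrow> t \<ge> 0 \<Longrightarrow>
        state_norm c p s t \<le> L * state_norm c p s 0 * exp (- \<gamma> * t)"
      using closed_loop_exp_bound[OF P, where u = u and c = c] by blast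
    show "\<exists>\<delta>>0. \<forall>s. closed_loop u c p s \<longrightarrow> state_norm c p s 0 < \<delta> \<longrightarrow>
        (\<forall>t\<ge>0. state_norm c p s t < \<epsilon>)"
    proof (intro exI[of _ "\<epsilon> / L"] conjI allI impI)
      show "\<epsilon> / L > 0" using \<open>\<epsilon> > 0\<close> L by simp
      fix s and t :: real
      assume cl: "closed_loop u c p s" and small: "state_norm c p s 0 < \<epsilon> / L" and "t \<ge> 0"
      have "L * state_norm c p s 0 * exp (- \<gamma> * t) \<le> L * state_norm c p s 0"
        using L \<open>\<gamma> > 0\<close> \<open>t \<ge> 0\<close> by (intro mult_left_le) (auto simp: state_norm_def)
      also have "\<dots> < \<epsilon>" using small L by (simp add: field_simps)
      finally show "state_norm c p s t < \<epsilon>" using bound[OF cl \<open>t \<ge> 0\<close>] by linarith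
    qed
  qed
  show "\<forall>s. closed_loop u c p s \<longrightarrow> (state_norm c p s \<longlongrightarrow> 0) at_top"
    using closed_loop_state_norm_tendsto_zero[OF P] by blast
qed

lemma closed_loop_outputs_tendsto:
  assumes P: "admissible_params p" and cl: "closed_loop u c p s"
  shows "(sW s \<longlongrightarrow> W_star p) at_top" and "(somega s \<longlongrightarrow> omega_star p) at_top"
    and "(sVt s \<longlongrightarrow> Vdc_star p) at_top"
proof -
  note n = closed_loop_state_norm_tendsto_zero[OF P cl]
  have "((\<lambda>t. \<bar>state_x p s t\<bar>) \<longlongrightarrow> 0) at_top" "((\<lambda>t. \<bar>state_d c s t\<bar>) \<longlongrightarrow> 0) at_top"
    by (rule tendsto_sandwich[OF _ _ tendsto_const n]; simp add: state_norm_def)+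
  then have x: "(state_x p s \<longlongrightarrow> 0) at_top" and d: "(state_d c s \<longlongrightarrow> 0) at_top"
    by (simp_all add: tendsto_rabs_zero_iff)
  have "((\<lambda>t. W_star p + state_x p s t) \<longlongrightarrow> W_star p) at_top"
    using tendsto_add[OF tendsto_const x] by simp
  then show "(sW s \<longlongrightarrow> W_star p) at_top" by (simp add: state_x_def)
  have "((\<lambda>t. omega_star p + freq_gain_energy u c p * state_x p s t
      + freq_gain_angle u c p * state_d c s t) \<longlongrightarrow> omega_star p) at_top"
    using x d by (auto intro!: tendsto_eq_intros)
  then show "(somega s \<longlongrightarrow> omega_star p) at_top"
    by (rule Lim_transform_eventually)
      (use eventually_ge_at_top[of 0] in \<open>eventually_elim, simp add: closed_loop_outputs(2)[OF P cl]\<close>)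
  have "((\<lambda>t. Vdc_star p + volt_gain_energy c p * state_x p s t
      + volt_gain_angle u c p * state_d c s t) \<longlongrightarrow> Vdc_star p) at_top"
    using x d by (auto intro!: tendsto_eq_intros)
  then show "(sVt s \<longlongrightarrow> Vdc_star p) at_top"
    by (rule Lim_transform_eventually)
      (use eventually_ge_at_top[of 0] in \<open>eventually_elim, simp add: closed_loop_outputs(3)[OF P cl]\<close>)
qed

theorem theorem1:
  fixes u :: control and c :: config and p :: mmc_params
  assumes "kp_ac p > 0" and "kp_dc p > 0" and "kw_ac p > 0" and "kw_dc p > 0"
    and "u = HybridDroop \<Longrightarrow> kw_ac p > kp_ac p"
    and "b_ac p > 0" and "k_ac p \<ge> 0" and "g_dc p > 0" and "k_dc p \<ge> 0"
  shows "asymptotically_stable u c p \<and>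
    (\<forall>s. closed_loop u c p s \<longrightarrow>
       (sW s \<longlongrightarrow> W_star p) at_top \<and>
       (somega s \<longlongrightarrow> omega_star p) at_top \<and>
       (sVt s \<longlongrightarrow> Vdc_star p) at_top)"
proof -
  have P: "admissible_params p" using assms by (simp add: admissible_params_def)
  show ?thesis
    using closed_loop_asymptotically_stable[OF P] closed_loop_outputs_tendsto[OF P] by blast
qed

end
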